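(* Let $\mathcal{A}$ be a family of nonempty subsets of $\mathbb{R}^n$ closed under linear combinations, and let $\mathcal{F}:\mathcal{A}\to\mathbb{R}_{\geqslant0}$ be decreasing under set inclusion and super-homogeneous of degree $1/\alpha$ for some $\alpha<0$. Let $K,L\in\mathcal{A}$ with $\mathcal{F}(K)\mathcal{F}(L)>0$ satisfy, for all $\lambda\in(0,1)$, \[ \mathcal{F}\bigl((1-\lambda)K+\lambda L\bigr)\leqslant C\bigl((1-\lambda)\mathcal{F}(K)^\alpha+\lambda\mathcal{F}(L)^\alpha\bigr)^{1/\alpha}\qquad(\ast) \] for some constant $C>0$. Then for any $p\geqslant1$ and all $\lambda\in(0,1)$, \[ \mathcal{F}\bigl((1-\lambda)\cdot K+_p\lambda\cdot L\bigr)\leqslant C\bigl((1-\lambda)\mathcal{F}(K)^{p\alpha}+\lambda\mathcal{F}(L)^{p\alpha}\bigr)^{1/(p\alpha)} \] whenever $(1-\lambda)\cdot K+_p\lambda\cdot L\in\mathcal{A}$. If equality holds for some $\lambda\in(0,1)$ and $p>1$, then $K,L$ satisfy $(\ast)$ with equality for some $\bar\lambda\in(0,1)$; if in addition $\mathcal{F}$ is strictly decreasing and $K,L$ are compact, then $\mathrm{conv}\,K$ and $\mathrm{conv}\,L$ contain the origin and are dilatates of each other; if furthermore $\mathcal{F}$ is strictly super-homogeneous of degree $1/\alpha$, then $\mathrm{conv}\,K=\mathrm{conv}\,L$.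
   Context: $\mathcal{F}$ is super-homogeneous of degree $1/\alpha$ ($\alpha\neq0$) if $\mathcal{F}(rK)\geqslant r^{1/\alpha}\mathcal{F}(K)$ for all $r\geqslant1$, strictly if the inequality is strict whenever $\mathcal{F}(K)>0$ and $r>1$. Strictly decreasing means $A\subsetneq B$ implies $\mathcal{F}(A)>\mathcal{F}(B)$. A dilatate of $A$ is $\lambda A$, $\lambda\geqslant0$. For $p>1$, $1/p+1/q=1$; $K+_pL=\{(1-\mu)^{1/q}x+\mu^{1/q}y: x\in K, y\in L, \mu\in[0,1]\}$, $\lambda\cdot K=\lambda^{1/p}K$; for $p=1$ this is Minkowski addition. *)

theory Defs
  imports "HOL-Analysis.Analysis"
begin

definition lin_comb :: "real \<Rightarrow> 'a::real_vector set \<Rightarrow> real \<Rightarrow> 'a set \<Rightarrow> 'a set" where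
  "lin_comb a K b L = {a *\<^sub>R x + b *\<^sub>R y | x y. x \<in> K \<and> y \<in> L}"

definition closed_lin_comb :: "'a::real_vector set set \<Rightarrow> bool" where
  "closed_lin_comb \<A> \<longleftrightarrow> (\<forall>A\<in>\<A>. \<forall>B\<in>\<A>. \<forall>a b. lin_comb a A b B \<in> \<A>)"

definition decreasing_on :: "'a set set \<Rightarrow> ('a set \<Rightarrow> real) \<Rightarrow> bool" where
  "decreasing_on \<A> F \<longleftrightarrow> (\<forall>A\<in>\<A>. \<forall>B\<in>\<A>. A \<subseteq> B \<longrightarrow> F B \<le> F A)"

definition strictly_decreasing_on :: "'a set set \<Rightarrow> ('a set \<Rightarrow> real) \<Rightarrow> bool" where
  "strictly_decreasing_on \<A> F \<longleftrightarrow> (\<forall>A\<in>\<A>. \<forall>B\<in>\<A>. A \<subset> B \<longrightarrow> F B < F A)"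

definition super_homogeneous_on ::
  "'a::real_vector set set \<Rightarrow> ('a set \<Rightarrow> real) \<Rightarrow> real \<Rightarrow> bool" where
  "super_homogeneous_on \<A> F \<alpha> \<longleftrightarrow>
     (\<forall>K\<in>\<A>. \<forall>r::real. r \<ge> 1 \<longrightarrow> F ((\<lambda>x. r *\<^sub>R x) ` K) \<ge> r powr (1/\<alpha>) * F K)"

definition strictly_super_homogeneous_on ::
  "'a::real_vector set set \<Rightarrow> ('a set \<Rightarrow> real) \<Rightarrow> real \<Rightarrow> bool" where
  "strictly_super_homogeneous_on \<A> F \<alpha> \<longleftrightarrow> super_homogeneous_on \<A> F \<alpha> \<and>
     (\<forall>K\<in>\<A>. \<forall>r::real. r > 1 \<longrightarrow> F K > 0 \<longrightarrow> F ((\<lambda>x. r *\<^sub>R x) ` K) > r powr (1/\<alpha>) * F K)"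

definition p_scale :: "real \<Rightarrow> real \<Rightarrow> 'a::real_vector set \<Rightarrow> 'a set" where
  "p_scale p s K = (\<lambda>x. (s powr (1/p)) *\<^sub>R x) ` K"

(* L_p sum; for p = 1 it is Minkowski addition (convention 0^0 = 1);
   for p > 1, 1/q = 1 - 1/p *)
definition p_sum :: "real \<Rightarrow> 'a::real_vector set \<Rightarrow> 'a set \<Rightarrow> 'a set" where
  "p_sum p K L = (if p = 1 then {x + y | x y. x \<in> K \<and> y \<in> L}
     else {((1 - \<mu>) powr (1 - 1/p)) *\<^sub>R x + (\<mu> powr (1 - 1/p)) *\<^sub>R y | x y \<mu>.
             x \<in> K \<and> y \<in> L \<and> 0 \<le> \<mu> \<and> \<mu> \<le> 1})"

end

theory Submission
  imports Defs
begin

text \<open>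
  For \<open>p > 1\<close> the set \<open>(1-s)\<cdot>K +\<^sub>p s\<cdot>L\<close> contains every combination
  \<open>a\<^sub>\<mu> K + b\<^sub>\<mu> L\<close> with \<open>a\<^sub>\<mu> = (1-\<mu>)\<^bsup>1/q\<^esup>(1-s)\<^bsup>1/p\<^esup>\<close> and
  \<open>b\<^sub>\<mu> = \<mu>\<^bsup>1/q\<^esup>s\<^bsup>1/p\<^esup>\<close>, and \<open>a\<^sub>\<mu> + b\<^sub>\<mu> \<le> 1\<close> by Young's inequality.
  Super-homogeneity extends \<open>(\<ast>)\<close> from convex to such sub-convex combinations, and at
  the parameter \<open>\<mu> = m\<close> where Hoelder's inequality is an equality the bound of \<open>(\<ast>)\<close>
  becomes the \<open>L\<^sub>p\<close> bound; monotonicity of \<open>F\<close> finishes the inequality.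

  In the equality case, strict monotonicity forces the combination at \<open>m\<close> to be the
  whole \<open>p\<close>-sum. Comparing support functions, \<open>\<mu> \<mapsto> a\<^sub>\<mu> h\<^sub>K + b\<^sub>\<mu> h\<^sub>L\<close> is then
  maximal at \<open>m\<close>, and the first-order condition there gives
  \<open>h\<^sub>L = (F(L)\<^sup>\<alpha> / F(K)\<^sup>\<alpha>) h\<^sub>K\<close>, i.e. the convex hulls are dilatates of each other.
  Strict super-homogeneity forces \<open>a\<^sub>m + b\<^sub>m = 1\<close>, which happens only when
  \<open>F(K) = F(L)\<close>.
\<close>

subsection \<open>Hoelder weights\<close>

text \<open>
  With \<open>1/q = 1 - 1/p\<close>, \<open>lp_weight p s \<mu> = \<mu>\<^bsup>1/q\<^esup>s\<^bsup>1/p\<^esup>\<close>, so the points of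
  \<open>(1-s)\<cdot>K +\<^sub>p s\<cdot>L\<close> with parameter \<open>\<mu>\<close> have the coefficients
  \<open>lp_weight p (1 - s) (1 - \<mu>)\<close> on \<open>K\<close> and \<open>lp_weight p s \<mu>\<close> on \<open>L\<close>. The \<open>holder_point\<close>
  is the \<open>\<mu>\<close> for which Hoelder's inequality
  \<open>lp_weight p (1 - s) (1 - \<mu>) x + lp_weight p s \<mu> y \<le> ((1-s) x\<^sup>p + s y\<^sup>p)\<^bsup>1/p\<^esup>\<close>
  is an equality.
\<close>

definition lp_weight :: "real \<Rightarrow> real \<Rightarrow> real \<Rightarrow> real" where
  "lp_weight p s \<mu> = \<mu> powr (1 - 1/p) * s powr (1/p)"

definition holder_point :: "real \<Rightarrow> real \<Rightarrow> real \<Rightarrow> real \<Rightarrow> real" where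
  "holder_point p s x y = s * y powr p / ((1 - s) * x powr p + s * y powr p)"

lemma holder_point_bounds:
  assumes "0 < s" "s < 1" "0 < x" "0 < y"
  shows "0 < holder_point p s x y" "holder_point p s x y < 1"
proof -
  have "0 < (1 - s) * x powr p" "0 < s * y powr p" using assms by auto
  then show "0 < holder_point p s x y" "holder_point p s x y < 1"
    by (auto simp: holder_point_def)
qed

lemma one_minus_holder_point:
  assumes "0 < s" "s < 1" "0 < x" "0 < y"
  shows "1 - holder_point p s x y = holder_point p (1 - s) y x"
proof -
  have "0 < (1 - s) * x powr p + s * y powr p" using assms by (simp add: add_pos_pos)
  then show ?thesis by (simp add: holder_point_def field_simps)
qed

lemma holder_point_powr_inverse:
  assumes "p > 0" "0 < s" "s < 1" "0 < x" "0 < y"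
  shows "holder_point p s x y powr (1/p) = s powr (1/p) * y / ((1 - s) * x powr p + s * y powr p) powr (1/p)"
  using assms by (simp add: holder_point_def powr_divide powr_mult powr_powr add_pos_pos)

lemma lp_weight_holder_point:
  assumes "p > 1" "0 < s" "s < 1" "0 < x" "0 < y"
  shows "lp_weight p s (holder_point p s x y) * y
           = s * y powr p / ((1 - s) * x powr p + s * y powr p) powr (1 - 1/p)"
proof -
  define S where "S = (1 - s) * x powr p + s * y powr p"
  have "S > 0" using assms by (simp add: S_def add_pos_pos)
  have m: "holder_point p s x y powr (1 - 1/p) = s powr (1 - 1/p) * y powr (p - 1) / S powr (1 - 1/p)"
    unfolding holder_point_def S_def[symmetric] using assms \<open>S > 0\<close>
    by (simp add: powr_divide powr_mult powr_powr algebra_simps)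
  have "lp_weight p s (holder_point p s x y) * y
      = (s powr (1 - 1/p) * s powr (1/p)) * (y powr (p - 1) * y) / S powr (1 - 1/p)"
    unfolding lp_weight_def m using \<open>S > 0\<close> by (simp add: field_simps)
  also have "\<dots> = s * y powr p / S powr (1 - 1/p)"
    using assms by (simp add: powr_add[symmetric] powr_diff)
  finally show ?thesis by (simp add: S_def)
qed

lemma lp_weight_holder_equality:
  assumes "p > 1" "0 < s" "s < 1" "0 < x" "0 < y"
  defines "m \<equiv> holder_point p s x y"
  shows "lp_weight p (1 - s) (1 - m) * x + lp_weight p s m * y
           = ((1 - s) * x powr p + s * y powr p) powr (1/p)"
proof -
  define S where "S = (1 - s) * x powr p + s * y powr p"
  have "S > 0" using assms by (simp add: S_def add_pos_pos)
  have "lp_weight p (1 - s) (1 - m) * x = (1 - s) * x powr p / S powr (1 - 1/p)"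
    using lp_weight_holder_point[of p "1 - s" y x] assms
    by (simp add: m_def one_minus_holder_point S_def add.commute)
  moreover have "lp_weight p s m * y = s * y powr p / S powr (1 - 1/p)"
    using lp_weight_holder_point[of p s x y] assms by (simp add: m_def S_def)
  ultimately have "lp_weight p (1 - s) (1 - m) * x + lp_weight p s m * y = S / S powr (1 - 1/p)"
    by (simp add: S_def add_divide_distrib)
  also have "\<dots> = S powr (1/p)" using \<open>S > 0\<close> powr_diff[of S 1 "1 - 1/p"] by simp
  finally show ?thesis by (simp add: S_def)
qed

lemma lp_weight_le:
  assumes "p > 1" "0 \<le> \<mu>" "0 \<le> s"
  shows "lp_weight p s \<mu> \<le> (1 - 1/p) * \<mu> + (1/p) * s"
proof (cases "\<mu> = 0 \<or> s = 0")
  case True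
  then show ?thesis using assms by (auto simp: lp_weight_def)
next
  case False
  then show ?thesis
    using Youngs_inequality_0[of "1 - 1/p" "1/p" \<mu> s] assms by (simp add: lp_weight_def)
qed

lemma lp_weight_sum_le_1:
  assumes "p > 1" "0 \<le> s" "s \<le> 1" "0 \<le> \<mu>" "\<mu> \<le> 1"
  shows "lp_weight p (1 - s) (1 - \<mu>) + lp_weight p s \<mu> \<le> 1"
proof -
  have "lp_weight p (1 - s) (1 - \<mu>) + lp_weight p s \<mu>
          \<le> ((1 - 1/p) * (1 - \<mu>) + (1/p) * (1 - s)) + ((1 - 1/p) * \<mu> + (1/p) * s)"
    using assms by (intro add_mono lp_weight_le) auto
  also have "\<dots> = 1" by (simp add: algebra_simps add_divide_distrib[symmetric])
  finally show ?thesis .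
qed

lemma powr_combination_max_stationary:
  fixes c1 c2 e m :: real
  assumes e: "0 < e" and m: "0 < m" "m < 1"
    and max: "\<And>\<mu>. 0 \<le> \<mu> \<Longrightarrow> \<mu> \<le> 1 \<Longrightarrow>
               (1 - \<mu>) powr e * c1 + \<mu> powr e * c2 \<le> (1 - m) powr e * c1 + m powr e * c2"
  shows "c1 * (1 - m) powr (e - 1) = c2 * m powr (e - 1)"
proof -
  have "((\<lambda>\<mu>. (1 - \<mu>) powr e * c1 + \<mu> powr e * c2) has_real_derivative
          c1 * (- e * (1 - m) powr (e - 1)) + c2 * (e * m powr (e - 1))) (at m)"
    using m by (auto intro!: derivative_eq_intros)
  moreover have "\<forall>\<mu>. \<bar>m - \<mu>\<bar> < min m (1 - m) \<longrightarrow>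
      (1 - \<mu>) powr e * c1 + \<mu> powr e * c2 \<le> (1 - m) powr e * c1 + m powr e * c2"
    using max by (auto simp: abs_if split: if_splits)
  ultimately have "c1 * (- e * (1 - m) powr (e - 1)) + c2 * (e * m powr (e - 1)) = 0"
    using m by (intro DERIV_local_max[where d = "min m (1 - m)"]) auto
  then have "e * (c2 * m powr (e - 1) - c1 * (1 - m) powr (e - 1)) = 0"
    by (simp add: algebra_simps)
  then show ?thesis using e by simp
qed

lemma powr_combination_max_nonneg:
  fixes c1 c2 e m :: real
  assumes e: "0 < e" "e < 1" and m: "0 < m" "m < 1"
    and max: "\<And>\<mu>. 0 \<le> \<mu> \<Longrightarrow> \<mu> \<le> 1 \<Longrightarrow>
               (1 - \<mu>) powr e * c1 + \<mu> powr e * c2 \<le> (1 - m) powr e * c1 + m powr e * c2"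
  shows "0 \<le> c1 \<or> 0 \<le> c2"
proof (rule ccontr)
  assume "\<not> (0 \<le> c1 \<or> 0 \<le> c2)"
  then have c: "c1 < 0" "c2 < 0" by auto
  define g where "g = (1 - m) powr e * c1 + m powr e * c2"
  \<comment> \<open>Since \<open>t\<^sup>e > t\<close> on \<open>(0,1)\<close>, \<open>g\<close> lies strictly below the chord \<open>(1 - m) c1 + m c2\<close>,
    yet it dominates both endpoint values \<open>c1\<close> and \<open>c2\<close>.\<close>
  have "(1 - m) powr e * c1 < (1 - m) * c1" "m powr e * c2 < m * c2"
    using powr_less_mono'[of "1 - m" e 1] powr_less_mono'[of m e 1] e m c
    by (auto intro: mult_strict_right_mono_neg)
  then have "g < (1 - m) * c1 + m * c2" by (simp add: g_def)
  also have "\<dots> \<le> (1 - m) * g + m * g"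
    using max[of 0] max[of 1] m by (intro add_mono mult_left_mono) (auto simp: g_def)
  finally show False by (simp add: algebra_simps)
qed

lemma lp_weight_combination_max_at_holder_point:
  assumes p: "p > 1" and s: "0 < s" "s < 1" and xy: "0 < x" "0 < y"
  defines "m \<equiv> holder_point p s x y"
  assumes max: "\<And>\<mu>. 0 \<le> \<mu> \<Longrightarrow> \<mu> \<le> 1 \<Longrightarrow>
      lp_weight p (1 - s) (1 - \<mu>) * A + lp_weight p s \<mu> * B
        \<le> lp_weight p (1 - s) (1 - m) * A + lp_weight p s m * B"
  shows "A * y = B * x" and "0 \<le> A"
proof -
  define e where "e = 1 - 1/p"
  define c1 where "c1 = (1 - s) powr (1/p) * A"
  define c2 where "c2 = s powr (1/p) * B"
  have e: "0 < e" "e < 1" using p by (auto simp: e_def)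
  have m: "0 < m" "m < 1" using holder_point_bounds[OF s xy] by (auto simp: m_def)
  have max': "(1 - \<mu>) powr e * c1 + \<mu> powr e * c2 \<le> (1 - m) powr e * c1 + m powr e * c2"
    if "0 \<le> \<mu>" "\<mu> \<le> 1" for \<mu>
    using max[OF that] by (simp add: lp_weight_def e_def c1_def c2_def mult.assoc)
  define S where "S = (1 - s) * x powr p + s * y powr p"
  have "S > 0" using s xy by (simp add: S_def add_pos_pos)
  have "m powr (e - 1) = S powr (1/p) / (s powr (1/p) * y)"
    using holder_point_powr_inverse[of p s x y] p s xy
    by (simp add: m_def S_def e_def powr_minus inverse_divide)
  moreover have "(1 - m) powr (e - 1) = S powr (1/p) / ((1 - s) powr (1/p) * x)"
    using holder_point_powr_inverse[of p "1 - s" y x] one_minus_holder_point[OF s xy] p s xy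
    by (simp add: m_def S_def e_def add.commute powr_minus inverse_divide)
  moreover have "c1 * (1 - m) powr (e - 1) = c2 * m powr (e - 1)"
    using powr_combination_max_stationary[OF e(1) m max'] .
  ultimately have "A * S powr (1/p) / x = B * S powr (1/p) / y"
    using s by (simp add: c1_def c2_def)
  then show proportional: "A * y = B * x" using xy \<open>S > 0\<close> by (simp add: field_simps)
  show "0 \<le> A"
  proof (rule ccontr)
    assume "\<not> 0 \<le> A"
    moreover have "B = A * y / x" using proportional xy by (simp add: field_simps)
    ultimately have "c1 < 0" "c2 < 0"
      using s xy by (auto simp: c1_def c2_def mult_pos_neg divide_neg_pos mult_neg_pos)
    then show False using powr_combination_max_nonneg[OF e m max'] by simp
  qed
qed

lemma eq_if_holder_point_weights_sum_eq_1:
  assumes p: "p > 1" and s: "0 < s" "s < 1" and xy: "0 < x" "0 < y"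
    and sum: "lp_weight p (1 - s) (1 - holder_point p s x y) + lp_weight p s (holder_point p s x y) = 1"
  shows "x = y"
proof -
  have "1 * y = 1 * x"
    using sum lp_weight_sum_le_1[OF p] s
    by (intro lp_weight_combination_max_at_holder_point(1)[OF p s xy]) auto
  then show ?thesis by simp
qed

subsection \<open>Support functions\<close>

definition support_function :: "'a::real_inner set \<Rightarrow> 'a \<Rightarrow> real" where
  "support_function S u = (SUP x\<in>S. u \<bullet> x)"

lemma support_function_eqI:
  assumes "x \<in> S" "\<And>y. y \<in> S \<Longrightarrow> u \<bullet> y \<le> u \<bullet> x"
  shows "support_function S u = u \<bullet> x"
  unfolding support_function_def using assms by (intro cSup_eq_maximum) auto

lemma support_function_attained:
  fixes S :: "'a::real_inner set"
  assumes "compact S" "S \<noteq> {}"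
  obtains x where "x \<in> S" "support_function S u = u \<bullet> x" "\<And>y. y \<in> S \<Longrightarrow> u \<bullet> y \<le> u \<bullet> x"
proof -
  have "continuous_on S (\<lambda>x. u \<bullet> x)" by (intro continuous_intros)
  then obtain x where "x \<in> S" "\<forall>y\<in>S. u \<bullet> y \<le> u \<bullet> x"
    using continuous_attains_sup[OF assms] by blast
  then show thesis using that support_function_eqI by blast
qed

lemma inner_le_support_function:
  fixes S :: "'a::real_inner set"
  assumes "compact S" "y \<in> S"
  shows "u \<bullet> y \<le> support_function S u"
  using support_function_attained[OF assms(1), of u] assms by (metis empty_iff)

lemma support_function_mono:
  fixes A B :: "'a::real_inner set"
  assumes "A \<subseteq> B" "A \<noteq> {}" "compact B"
  shows "support_function A u \<le> support_function B u"
  unfolding support_function_def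
  using assms inner_le_support_function[OF assms(3)] by (intro cSUP_least) (auto simp: support_function_def)

lemma support_function_lin_comb:
  fixes K L :: "'a::real_inner set"
  assumes K: "compact K" "K \<noteq> {}" and L: "compact L" "L \<noteq> {}" and "0 \<le> a" "0 \<le> b"
  shows "support_function (lin_comb a K b L) u = a * support_function K u + b * support_function L u"
proof -
  obtain x where x: "x \<in> K" "support_function K u = u \<bullet> x" "\<And>x'. x' \<in> K \<Longrightarrow> u \<bullet> x' \<le> u \<bullet> x"
    using support_function_attained[OF K, of u] by blast
  obtain y where y: "y \<in> L" "support_function L u = u \<bullet> y" "\<And>y'. y' \<in> L \<Longrightarrow> u \<bullet> y' \<le> u \<bullet> y"
    using support_function_attained[OF L, of u] by blast
  have "support_function (lin_comb a K b L) u = u \<bullet> (a *\<^sub>R x + b *\<^sub>R y)"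
  proof (rule support_function_eqI)
    show "a *\<^sub>R x + b *\<^sub>R y \<in> lin_comb a K b L" using x y by (auto simp: lin_comb_def)
    fix z assume "z \<in> lin_comb a K b L"
    then obtain x' y' where "x' \<in> K" "y' \<in> L" "z = a *\<^sub>R x' + b *\<^sub>R y'" by (auto simp: lin_comb_def)
    then show "u \<bullet> z \<le> u \<bullet> (a *\<^sub>R x + b *\<^sub>R y)"
      using x(3) y(3) assms by (auto simp: inner_add_right intro!: add_mono mult_left_mono)
  qed
  then show ?thesis using x y by (simp add: inner_add_right)
qed

lemma lin_comb_zero_right: "L \<noteq> {} \<Longrightarrow> lin_comb a K 0 L = (\<lambda>x. a *\<^sub>R x) ` K"
  unfolding lin_comb_def by auto

lemma compact_lin_comb:
  fixes K L :: "'a::real_normed_vector set"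
  assumes "compact K" "compact L"
  shows "compact (lin_comb a K b L)"
proof -
  have "lin_comb a K b L = {x + y | x y. x \<in> (\<lambda>x. a *\<^sub>R x) ` K \<and> y \<in> (\<lambda>y. b *\<^sub>R y) ` L}"
    by (auto simp: lin_comb_def)
  then show ?thesis
    using compact_sums[OF compact_scaling[OF assms(1)] compact_scaling[OF assms(2)]] by simp
qed

lemma support_function_scaleR:
  fixes S :: "'a::real_inner set"
  assumes "compact S" "S \<noteq> {}" "0 \<le> t"
  shows "support_function ((\<lambda>x. t *\<^sub>R x) ` S) u = t * support_function S u"
  using support_function_lin_comb[OF assms(1,2,1,2) assms(3), of 0 u]
  by (simp add: lin_comb_zero_right[OF assms(2)])

lemma convex_hull_subset_if_support_function_le:
  fixes A B :: "'a::euclidean_space set"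
  assumes "compact A" "compact B" "B \<noteq> {}"
    and le: "\<And>u. support_function A u \<le> support_function B u"
  shows "convex hull A \<subseteq> convex hull B"
proof (rule hull_minimal)
  show "A \<subseteq> convex hull B"
  proof
    fix z assume "z \<in> A"
    show "z \<in> convex hull B"
    proof (rule ccontr)
      assume "z \<notin> convex hull B"
      moreover have "closed (convex hull B)"
        using assms(2) by (simp add: compact_convex_hull compact_imp_closed)
      ultimately obtain a c where "a \<bullet> z < c" and sep: "\<forall>x\<in>convex hull B. c < a \<bullet> x"
        using separating_hyperplane_closed_point[of "convex hull B" z] by auto
      obtain y where "y \<in> B" "support_function B (- a) = - a \<bullet> y"
        using support_function_attained[OF assms(2,3), of "- a"] .
      then have "support_function B (- a) < - c" using sep hull_inc[of y B] by force
      moreover have "- a \<bullet> z \<le> support_function B (- a)"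
        using inner_le_support_function[OF assms(1) \<open>z \<in> A\<close>] le order_trans by blast
      ultimately show False using \<open>a \<bullet> z < c\<close> by simp
    qed
  qed
qed simp

lemma zero_in_convex_hull_if_support_function_nonneg:
  fixes S :: "'a::euclidean_space set"
  assumes "compact S" "S \<noteq> {}" "\<And>u. 0 \<le> support_function S u"
  shows "0 \<in> convex hull S"
  using convex_hull_subset_if_support_function_le[of "{0}" S] assms
  by (simp add: support_function_def)

lemma convex_hull_eq_scaleR_if_support_function_eq:
  fixes K L :: "'a::euclidean_space set"
  assumes K: "compact K" "K \<noteq> {}" and L: "compact L" "L \<noteq> {}" and "0 \<le> t"
    and h: "\<And>u. support_function L u = t * support_function K u"
  shows "convex hull L = (\<lambda>x. t *\<^sub>R x) ` (convex hull K)"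
proof -
  let ?tK = "(\<lambda>x. t *\<^sub>R x) ` K"
  have tK: "compact ?tK" "?tK \<noteq> {}" using K by (auto intro: compact_scaling)
  have "support_function ?tK u = support_function L u" for u
    using support_function_scaleR[OF K \<open>0 \<le> t\<close>] h by simp
  then have "convex hull L = convex hull ?tK"
    using convex_hull_subset_if_support_function_le L tK by (metis order_refl subset_antisym)
  then show ?thesis by (simp add: convex_hull_scaling)
qed

lemma convex_hulls_dilate_if_holder_lin_comb_max:
  fixes K L :: "'a::euclidean_space set"
  assumes K: "compact K" "K \<noteq> {}" and L: "compact L" "L \<noteq> {}"
    and p: "p > 1" and s: "0 < s" "s < 1" and xy: "0 < x" "0 < y"
  defines "m \<equiv> holder_point p s x y"
  assumes max: "\<And>\<mu>. 0 \<le> \<mu> \<Longrightarrow> \<mu> \<le> 1 \<Longrightarrow>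
      lin_comb (lp_weight p (1 - s) (1 - \<mu>)) K (lp_weight p s \<mu>) L
        \<subseteq> lin_comb (lp_weight p (1 - s) (1 - m)) K (lp_weight p s m) L"
  shows "0 \<in> convex hull K" "0 \<in> convex hull L"
    and "convex hull L = (\<lambda>z. (y / x) *\<^sub>R z) ` (convex hull K)"
proof -
  have nonempty: "lin_comb a K b L \<noteq> {}" for a b using K L by (auto simp: lin_comb_def)
  have weights: "0 \<le> lp_weight p t \<nu>" for t \<nu> by (simp add: lp_weight_def)
  have support: "support_function K u * y = support_function L u * x \<and> 0 \<le> support_function K u" for u
  proof -
    have "support_function (lin_comb (lp_weight p (1 - s) (1 - \<mu>)) K (lp_weight p s \<mu>) L) u
            \<le> support_function (lin_comb (lp_weight p (1 - s) (1 - m)) K (lp_weight p s m) L) u"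
      if "0 \<le> \<mu>" "\<mu> \<le> 1" for \<mu>
      by (intro support_function_mono max[OF that] nonempty compact_lin_comb K(1) L(1))
    then have "lp_weight p (1 - s) (1 - \<mu>) * support_function K u + lp_weight p s \<mu> * support_function L u
            \<le> lp_weight p (1 - s) (1 - m) * support_function K u + lp_weight p s m * support_function L u"
      if "0 \<le> \<mu>" "\<mu> \<le> 1" for \<mu>
      using that by (simp only: support_function_lin_comb[OF K L weights weights])
    then show ?thesis
      using lp_weight_combination_max_at_holder_point[OF p s xy,
          of "support_function K u" "support_function L u"]
      by (simp add: m_def)
  qed
  then have proportional: "support_function L u = (y / x) * support_function K u" for u
    using xy by (simp add: field_simps)
  show "0 \<in> convex hull K"
    using support K by (intro zero_in_convex_hull_if_support_function_nonneg) auto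
  show "0 \<in> convex hull L"
    using support proportional L xy by (intro zero_in_convex_hull_if_support_function_nonneg) auto
  show "convex hull L = (\<lambda>z. (y / x) *\<^sub>R z) ` (convex hull K)"
    using K L xy proportional by (intro convex_hull_eq_scaleR_if_support_function_eq) auto
qed

subsection \<open>Sub-convex combinations of \<open>K\<close> and \<open>L\<close>\<close>

lemma super_homogeneous_on_shrink:
  assumes "super_homogeneous_on \<A> F \<alpha>" "M \<in> \<A>" "(\<lambda>x. t *\<^sub>R x) ` M \<in> \<A>" "0 < t" "t \<le> 1"
  shows "F ((\<lambda>x. t *\<^sub>R x) ` M) \<le> t powr (1/\<alpha>) * F M"
proof -
  have "(\<lambda>x. (1/t) *\<^sub>R x) ` (\<lambda>x. t *\<^sub>R x) ` M = M"
    using assms by (auto simp: image_image image_iff)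
  moreover have "1 \<le> 1/t" using assms by simp
  ultimately have "(1/t) powr (1/\<alpha>) * F ((\<lambda>x. t *\<^sub>R x) ` M) \<le> F M"
    using assms(1,3) unfolding super_homogeneous_on_def by metis
  then show ?thesis using assms by (simp add: powr_divide field_simps)
qed

lemma strictly_super_homogeneous_on_shrink:
  assumes "strictly_super_homogeneous_on \<A> F \<alpha>" "M \<in> \<A>" "(\<lambda>x. t *\<^sub>R x) ` M \<in> \<A>"
    and "0 < t" "t < 1" "0 < F ((\<lambda>x. t *\<^sub>R x) ` M)"
  shows "F ((\<lambda>x. t *\<^sub>R x) ` M) < t powr (1/\<alpha>) * F M"
proof -
  have "(\<lambda>x. (1/t) *\<^sub>R x) ` (\<lambda>x. t *\<^sub>R x) ` M = M"
    using assms by (auto simp: image_image image_iff)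
  moreover have "1 < 1/t" using assms by simp
  ultimately have "(1/t) powr (1/\<alpha>) * F ((\<lambda>x. t *\<^sub>R x) ` M) < F M"
    using assms(1,3,6) unfolding strictly_super_homogeneous_on_def by metis
  then show ?thesis using assms by (simp add: powr_divide field_simps)
qed

lemma normalized_weights:
  fixes a b :: real
  assumes "a + b \<noteq> 0"
  shows "(a + b) * (1 - b / (a + b)) = a" "(a + b) * (b / (a + b)) = b"
  using assms by (simp_all add: field_simps)

lemma lin_comb_eq_image: "lin_comb a K b L = (\<lambda>(x, y). a *\<^sub>R x + b *\<^sub>R y) ` (K \<times> L)"
  unfolding lin_comb_def by auto

lemma lin_comb_eq_scaleR:
  assumes "a + b \<noteq> 0"
  shows "lin_comb a K b L = (\<lambda>x. (a + b) *\<^sub>R x) ` lin_comb (1 - b / (a + b)) K (b / (a + b)) L"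
proof -
  have "(a + b) *\<^sub>R ((1 - b / (a + b)) *\<^sub>R x + (b / (a + b)) *\<^sub>R y) = a *\<^sub>R x + b *\<^sub>R y" for x y :: 'a
    by (simp only: scaleR_add_right scaleR_scaleR normalized_weights[OF assms])
  then show ?thesis unfolding lin_comb_eq_image image_image by (simp add: case_prod_beta)
qed

lemma powr_convex_combination_scale:
  fixes a b X Y r :: real
  assumes "0 < a" "0 < b" "0 \<le> X" "0 \<le> Y"
  shows "(a + b) powr r * (C * ((1 - b / (a + b)) * X + b / (a + b) * Y) powr r)
           = C * (a * X + b * Y) powr r"
proof -
  have "(a + b) * ((1 - b / (a + b)) * X + b / (a + b) * Y) = a * X + b * Y"
    using normalized_weights[of a b] assms by (simp add: distrib_left mult.assoc[symmetric])
  moreover have "0 \<le> (1 - b / (a + b)) * X + b / (a + b) * Y" using assms by simp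
  ultimately show ?thesis using assms by (metis powr_mult less_eq_real_def add_pos_pos mult.left_commute)
qed

lemma lin_comb_lp_weight_subset_p_sum:
  assumes "p > 1" "0 \<le> \<mu>" "\<mu> \<le> 1"
  shows "lin_comb (lp_weight p (1 - s) (1 - \<mu>)) K (lp_weight p s \<mu>) L
           \<subseteq> p_sum p (p_scale p (1 - s) K) (p_scale p s L)"
proof
  fix z assume "z \<in> lin_comb (lp_weight p (1 - s) (1 - \<mu>)) K (lp_weight p s \<mu>) L"
  then obtain x y where "x \<in> K" "y \<in> L"
    and "z = (1 - \<mu>) powr (1 - 1/p) *\<^sub>R ((1 - s) powr (1/p) *\<^sub>R x)
              + \<mu> powr (1 - 1/p) *\<^sub>R (s powr (1/p) *\<^sub>R y)"
    by (auto simp: lin_comb_def lp_weight_def)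
  moreover have "(1 - s) powr (1/p) *\<^sub>R x \<in> p_scale p (1 - s) K" "s powr (1/p) *\<^sub>R y \<in> p_scale p s L"
    using \<open>x \<in> K\<close> \<open>y \<in> L\<close> by (auto simp: p_scale_def)
  moreover have "p_sum p A B = {(1 - \<nu>) powr (1 - 1/p) *\<^sub>R a + \<nu> powr (1 - 1/p) *\<^sub>R b
      | a b \<nu>. a \<in> A \<and> b \<in> B \<and> 0 \<le> \<nu> \<and> \<nu> \<le> 1}" for A B :: "'a set"
    using assms by (simp add: p_sum_def)
  ultimately show "z \<in> p_sum p (p_scale p (1 - s) K) (p_scale p s L)"
    using assms by blast
qed

lemma p_sum_one_eq_lin_comb:
  assumes "0 \<le> s" "s \<le> 1"
  shows "p_sum 1 (p_scale 1 (1 - s) K) (p_scale 1 s L) = lin_comb (1 - s) K s L"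
  using assms by (auto simp: p_sum_def p_scale_def lin_comb_def)

context
  fixes \<A> :: "'a::real_vector set set" and F :: "'a set \<Rightarrow> real" and \<alpha> C :: real and K L :: "'a set"
  assumes closed: "closed_lin_comb \<A>" and K: "K \<in> \<A>" and L: "L \<in> \<A>"
    and F_sh: "super_homogeneous_on \<A> F \<alpha>"
    and star: "\<forall>s. 0 < s \<and> s < 1 \<longrightarrow>
       F (lin_comb (1 - s) K s L) \<le> C * ((1 - s) * F K powr \<alpha> + s * F L powr \<alpha>) powr (1/\<alpha>)"
begin

lemma star_le:
  "0 < s \<Longrightarrow> s < 1 \<Longrightarrow>
     F (lin_comb (1 - s) K s L) \<le> C * ((1 - s) * F K powr \<alpha> + s * F L powr \<alpha>) powr (1/\<alpha>)"
  using star by blast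

lemma lin_comb_in: "lin_comb a K b L \<in> \<A>"
  using closed K L unfolding closed_lin_comb_def by blast

context
  fixes a b u :: real
  assumes a: "0 < a" and b: "0 < b"
  defines "u \<equiv> b / (a + b)"
begin

lemma normalized_weight_bounds: "0 < u" "u < 1"
  using a b by (auto simp: u_def)

lemma lin_comb_eq_scaleR_normalized:
  "lin_comb a K b L = (\<lambda>x. (a + b) *\<^sub>R x) ` lin_comb (1 - u) K u L"
  unfolding u_def using a b by (intro lin_comb_eq_scaleR) simp

lemma star_bound_scaled:
  "(a + b) powr (1/\<alpha>) * (C * ((1 - u) * F K powr \<alpha> + u * F L powr \<alpha>) powr (1/\<alpha>))
     = C * (a * F K powr \<alpha> + b * F L powr \<alpha>) powr (1/\<alpha>)"
  unfolding u_def using a b by (intro powr_convex_combination_scale) auto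

lemma F_lin_comb_le_scaled:
  assumes "a + b \<le> 1"
  shows "F (lin_comb a K b L) \<le> (a + b) powr (1/\<alpha>) * F (lin_comb (1 - u) K u L)"
  unfolding lin_comb_eq_scaleR_normalized using a b assms
  by (intro super_homogeneous_on_shrink[OF F_sh lin_comb_in])
     (auto simp: lin_comb_eq_scaleR_normalized[symmetric] lin_comb_in)

lemma lin_comb_le_star_bound:
  assumes "a + b \<le> 1"
  shows "F (lin_comb a K b L) \<le> C * (a * F K powr \<alpha> + b * F L powr \<alpha>) powr (1/\<alpha>)"
proof -
  have "F (lin_comb a K b L) \<le> (a + b) powr (1/\<alpha>) * F (lin_comb (1 - u) K u L)"
    using F_lin_comb_le_scaled[OF assms] .
  also have "\<dots> \<le> (a + b) powr (1/\<alpha>) * (C * ((1 - u) * F K powr \<alpha> + u * F L powr \<alpha>) powr (1/\<alpha>))"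
    using star_le[OF normalized_weight_bounds] by (simp add: mult_left_mono)
  also have "\<dots> = C * (a * F K powr \<alpha> + b * F L powr \<alpha>) powr (1/\<alpha>)"
    by (rule star_bound_scaled)
  finally show ?thesis .
qed

lemma star_eq_if_lin_comb_ge_star_bound:
  assumes "a + b \<le> 1"
    and "C * (a * F K powr \<alpha> + b * F L powr \<alpha>) powr (1/\<alpha>) \<le> F (lin_comb a K b L)"
  shows "F (lin_comb (1 - u) K u L) = C * ((1 - u) * F K powr \<alpha> + u * F L powr \<alpha>) powr (1/\<alpha>)"
proof -
  have "(a + b) powr (1/\<alpha>) * (C * ((1 - u) * F K powr \<alpha> + u * F L powr \<alpha>) powr (1/\<alpha>))
          \<le> (a + b) powr (1/\<alpha>) * F (lin_comb (1 - u) K u L)"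
    unfolding star_bound_scaled using assms F_lin_comb_le_scaled by (meson order_trans)
  then have "C * ((1 - u) * F K powr \<alpha> + u * F L powr \<alpha>) powr (1/\<alpha>) \<le> F (lin_comb (1 - u) K u L)"
    using a b by simp
  then show ?thesis using star_le[OF normalized_weight_bounds] by simp
qed

lemma lin_comb_less_star_bound:
  assumes SSH: "strictly_super_homogeneous_on \<A> F \<alpha>" and "0 < C" "0 < F K" "a + b < 1"
  shows "F (lin_comb a K b L) < C * (a * F K powr \<alpha> + b * F L powr \<alpha>) powr (1/\<alpha>)"
proof (cases "0 < F (lin_comb a K b L)")
  case True
  have "F (lin_comb a K b L) < (a + b) powr (1/\<alpha>) * F (lin_comb (1 - u) K u L)"
    using True a b assms unfolding lin_comb_eq_scaleR_normalized
    by (intro strictly_super_homogeneous_on_shrink[OF SSH lin_comb_in])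
       (auto simp: lin_comb_eq_scaleR_normalized[symmetric] lin_comb_in)
  also have "\<dots> \<le> (a + b) powr (1/\<alpha>) * (C * ((1 - u) * F K powr \<alpha> + u * F L powr \<alpha>) powr (1/\<alpha>))"
    using star_le[OF normalized_weight_bounds] by (simp add: mult_left_mono)
  also have "\<dots> = C * (a * F K powr \<alpha> + b * F L powr \<alpha>) powr (1/\<alpha>)"
    by (rule star_bound_scaled)
  finally show ?thesis .
next
  case False
  have "0 < a * F K powr \<alpha> + b * F L powr \<alpha>" using assms a b by (simp add: add_pos_nonneg)
  then show ?thesis using False \<open>0 < C\<close> by (simp add: not_less order_le_less_trans)
qed

end

context
  fixes p s m R :: real and P LC :: "'a set"
  assumes F_dec: "decreasing_on \<A> F" and FK: "0 < F K" and FL: "0 < F L"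
    and p: "1 < p" and s: "0 < s" "s < 1"
  defines "m \<equiv> holder_point p s (F K powr \<alpha>) (F L powr \<alpha>)"
    and "P \<equiv> p_sum p (p_scale p (1 - s) K) (p_scale p s L)"
    and "LC \<equiv> lin_comb (lp_weight p (1 - s) (1 - m)) K (lp_weight p s m) L"
    and "R \<equiv> C * ((1 - s) * F K powr (p * \<alpha>) + s * F L powr (p * \<alpha>)) powr (1/(p * \<alpha>))"
begin

lemma holder_point_in_unit_interval: "0 < m" "m < 1"
  using holder_point_bounds[OF s] FK FL by (simp_all add: m_def)

lemma holder_point_weights:
  "0 < lp_weight p (1 - s) (1 - m)" "0 < lp_weight p s m"
  "lp_weight p (1 - s) (1 - m) + lp_weight p s m \<le> 1"
  using holder_point_in_unit_interval s lp_weight_sum_le_1[OF p, of s m]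
  by (auto simp: lp_weight_def)

lemma star_bound_at_holder_point:
  "C * (lp_weight p (1 - s) (1 - m) * F K powr \<alpha> + lp_weight p s m * F L powr \<alpha>) powr (1/\<alpha>) = R"
  using lp_weight_holder_equality[OF p s, of "F K powr \<alpha>" "F L powr \<alpha>"] FK FL
  by (simp add: m_def R_def powr_powr mult.commute)

lemma F_holder_lin_comb_le: "F LC \<le> R"
  using lin_comb_le_star_bound[OF holder_point_weights] star_bound_at_holder_point
  by (simp add: LC_def)

lemma holder_lin_comb_subset_p_sum: "lin_comb (lp_weight p (1 - s) (1 - \<mu>)) K (lp_weight p s \<mu>) L \<subseteq> P"
  if "0 \<le> \<mu>" "\<mu> \<le> 1"
  unfolding P_def using lin_comb_lp_weight_subset_p_sum[OF p that] .

lemma F_p_sum_le_holder_lin_comb: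
  assumes "P \<in> \<A>"
  shows "F P \<le> F LC"
  using F_dec assms lin_comb_in holder_lin_comb_subset_p_sum holder_point_in_unit_interval
  unfolding decreasing_on_def LC_def by (meson less_imp_le)

lemma F_p_sum_le:
  assumes "P \<in> \<A>"
  shows "F P \<le> R"
  using F_p_sum_le_holder_lin_comb[OF assms] F_holder_lin_comb_le by linarith

lemma star_eq_if_F_p_sum_eq:
  assumes "P \<in> \<A>" "F P = R"
  shows "\<exists>u. 0 < u \<and> u < 1 \<and>
           F (lin_comb (1 - u) K u L) = C * ((1 - u) * F K powr \<alpha> + u * F L powr \<alpha>) powr (1/\<alpha>)"
proof -
  have "C * (lp_weight p (1 - s) (1 - m) * F K powr \<alpha> + lp_weight p s m * F L powr \<alpha>) powr (1/\<alpha>) \<le> F LC"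
    using F_p_sum_le_holder_lin_comb[OF assms(1)] assms(2) star_bound_at_holder_point by simp
  then show ?thesis
    using star_eq_if_lin_comb_ge_star_bound[OF holder_point_weights] normalized_weight_bounds[OF holder_point_weights(1,2)]
    unfolding LC_def by blast
qed

lemma p_sum_eq_holder_lin_comb:
  assumes "strictly_decreasing_on \<A> F" "P \<in> \<A>" "F P = R"
  shows "P = LC"
proof (rule ccontr)
  assume "P \<noteq> LC"
  moreover have "LC \<subseteq> P"
    using holder_lin_comb_subset_p_sum holder_point_in_unit_interval by (simp add: LC_def less_imp_le)
  ultimately have "F P < F LC" using assms(1,2) lin_comb_in unfolding strictly_decreasing_on_def LC_def by blast
  then show False using F_holder_lin_comb_le assms(3) by simp
qed

lemma lin_comb_lp_weight_subset_holder_lin_comb: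
  assumes "strictly_decreasing_on \<A> F" "P \<in> \<A>" "F P = R" "0 \<le> \<mu>" "\<mu> \<le> 1"
  shows "lin_comb (lp_weight p (1 - s) (1 - \<mu>)) K (lp_weight p s \<mu>) L \<subseteq> LC"
  using holder_lin_comb_subset_p_sum[OF assms(4,5)] p_sum_eq_holder_lin_comb[OF assms(1-3)] by simp

lemma holder_point_weights_sum_eq_1:
  assumes "strictly_super_homogeneous_on \<A> F \<alpha>" "0 < C" "P \<in> \<A>" "F P = R"
  shows "lp_weight p (1 - s) (1 - m) + lp_weight p s m = 1"
proof (rule ccontr)
  assume "lp_weight p (1 - s) (1 - m) + lp_weight p s m \<noteq> 1"
  then have "F LC < R"
    using lin_comb_less_star_bound[OF holder_point_weights(1,2) assms(1,2) FK] holder_point_weights(3)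
      star_bound_at_holder_point by (simp add: LC_def)
  then show False using F_p_sum_le_holder_lin_comb assms(3,4) by simp
qed

end

end

theorem mainTheorem4:
  fixes \<A> :: "'a::euclidean_space set set"
    and F :: "'a set \<Rightarrow> real"
    and \<alpha> C :: real and K L :: "'a set"
  assumes nonempty: "\<forall>A\<in>\<A>. A \<noteq> {}"
    and closed: "closed_lin_comb \<A>"
    and F_nonneg: "\<forall>A\<in>\<A>. F A \<ge> 0"
    and F_dec: "decreasing_on \<A> F"
    and alpha_neg: "\<alpha> < 0"
    and F_sh: "super_homogeneous_on \<A> F \<alpha>"
    and KL: "K \<in> \<A>" "L \<in> \<A>"
    and pos: "F K * F L > 0"
    and C_pos: "C > 0"
    and star: "\<forall>s. 0 < s \<and> s < 1 \<longrightarrow>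
       F (lin_comb (1 - s) K s L)
         \<le> C * ((1 - s) * F K powr \<alpha> + s * F L powr \<alpha>) powr (1/\<alpha>)"
  shows
    "(\<forall>p s. p \<ge> 1 \<and> 0 < s \<and> s < 1 \<and>
         p_sum p (p_scale p (1 - s) K) (p_scale p s L) \<in> \<A> \<longrightarrow>
         F (p_sum p (p_scale p (1 - s) K) (p_scale p s L))
           \<le> C * ((1 - s) * F K powr (p * \<alpha>) + s * F L powr (p * \<alpha>)) powr (1/(p * \<alpha>)))
     \<and>
     (\<forall>p s. p > 1 \<and> 0 < s \<and> s < 1 \<and>
         p_sum p (p_scale p (1 - s) K) (p_scale p s L) \<in> \<A> \<and>
         F (p_sum p (p_scale p (1 - s) K) (p_scale p s L))
           = C * ((1 - s) * F K powr (p * \<alpha>) + s * F L powr (p * \<alpha>)) powr (1/(p * \<alpha>))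
       \<longrightarrow>
         (\<exists>u. 0 < u \<and> u < 1 \<and>
            F (lin_comb (1 - u) K u L)
              = C * ((1 - u) * F K powr \<alpha> + u * F L powr \<alpha>) powr (1/\<alpha>))
         \<and>
         (strictly_decreasing_on \<A> F \<and> compact K \<and> compact L \<longrightarrow>
            0 \<in> convex hull K \<and> 0 \<in> convex hull L \<and>
            (\<exists>t::real. t \<ge> 0 \<and>
               (convex hull K = (\<lambda>x. t *\<^sub>R x) ` (convex hull L) \<or>
                convex hull L = (\<lambda>x. t *\<^sub>R x) ` (convex hull K)))
            \<and>
            (strictly_super_homogeneous_on \<A> F \<alpha> \<longrightarrow> convex hull K = convex hull L)))"
proof -
  have FK: "0 < F K" and FL: "0 < F L"
    using pos F_nonneg KL by (auto simp: zero_less_mult_iff)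
  note p_sum_facts = F_p_sum_le star_eq_if_F_p_sum_eq lin_comb_lp_weight_subset_holder_lin_comb
    holder_point_weights_sum_eq_1
  note p_sum_facts = p_sum_facts[OF closed KL F_sh star F_dec FK FL]
  show ?thesis
  proof (intro conjI allI impI; elim conjE)
    fix p s assume "1 \<le> p" "0 < s" "s < 1" "p_sum p (p_scale p (1 - s) K) (p_scale p s L) \<in> \<A>"
    then show "F (p_sum p (p_scale p (1 - s) K) (p_scale p s L))
           \<le> C * ((1 - s) * F K powr (p * \<alpha>) + s * F L powr (p * \<alpha>)) powr (1/(p * \<alpha>))"
      using p_sum_facts(1) star p_sum_one_eq_lin_comb[of s K L] by (cases "p = 1") auto
  next
    fix p s assume p: "1 < p" and s: "0 < s" "s < 1" and in_A: "p_sum p (p_scale p (1 - s) K) (p_scale p s L) \<in> \<A>"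
      and eq: "F (p_sum p (p_scale p (1 - s) K) (p_scale p s L))
           = C * ((1 - s) * F K powr (p * \<alpha>) + s * F L powr (p * \<alpha>)) powr (1/(p * \<alpha>))"
    show "\<exists>u. 0 < u \<and> u < 1 \<and>
            F (lin_comb (1 - u) K u L) = C * ((1 - u) * F K powr \<alpha> + u * F L powr \<alpha>) powr (1/\<alpha>)"
      using p_sum_facts(2)[OF p s in_A eq] .
    assume SD: "strictly_decreasing_on \<A> F" and "compact K" "compact L"
    have FK_FL: "0 < F K powr \<alpha>" "0 < F L powr \<alpha>" using FK FL by simp_all
    note hulls = convex_hulls_dilate_if_holder_lin_comb_max[OF \<open>compact K\<close> _ \<open>compact L\<close> _ p s FK_FL
        p_sum_facts(3)[OF p s SD in_A eq]]
    show "0 \<in> convex hull K" "0 \<in> convex hull L" using hulls nonempty KL by auto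
    show "\<exists>t\<ge>0. convex hull K = (\<lambda>x. t *\<^sub>R x) ` (convex hull L) \<or>
                convex hull L = (\<lambda>x. t *\<^sub>R x) ` (convex hull K)"
      using hulls nonempty KL FK_FL by (auto intro!: exI[of _ "F L powr \<alpha> / F K powr \<alpha>"])
    show "convex hull K = convex hull L" if "strictly_super_homogeneous_on \<A> F \<alpha>"
      using hulls nonempty KL FK_FL eq_if_holder_point_weights_sum_eq_1[OF p s FK_FL]
        p_sum_facts(4)[OF p s that C_pos in_A eq] by simp
  qed
qed

end
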